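(* The following statement is false: for all integers $m>a\geq0$ and $n>b\geq0$, an erasure pattern $\mathcal{E}\subseteq[m]\times[n]$ is correctable in the topology $T_{m\times n}(a,b,0)$ if and only if it is regular.
   Context: Positions of vectors in $\mathbb{F}^{mn}$ are identified with $[m]\times[n]$, $[k]=\{1,\dots,k\}$. For linear codes $\mathcal{C}_1\subseteq\mathbb{F}^m,\mathcal{C}_2\subseteq\mathbb{F}^n$, $\mathcal{C}_1\otimes\mathcal{C}_2$ is the row span of the Kronecker product of their generator matrices. A code for the topology $T_{m\times n}(a,b,0)$ is a linear code over a finite field $\mathbb{F}$ whose parity-check matrix is a parity-check matrix of $\mathcal{C}_{\mathsf{col}}\otimes\mathcal{C}_{\mathsf{row}}$, where $\mathcal{C}_{\mathsf{col}}$ is a linear $[m,\geq m-a]$ code and $\mathcal{C}_{\mathsf{row}}$ a linear $[n,\geq n-b]$ code over $\mathbb{F}$; $\mathbb{C}_{m\times n}(a,b,0)$ is the set of these codes (over any finite field). A code corrects an erasure pattern $\mathcal{E}$ if no two distinct codewords agree on all positions outside $\mathcal{E}$; $\mathcal{E}$ is correctable in $T_{m\times n}(a,b,0)$ if some code in $\mathbb{C}_{m\times n}(a,b,0)$ corrects it. An erasure pattern $\mathcal{E}\subseteq[m]\times[n]$ is regular if for all $\mathcal{U}\subseteq[m]$ with $|\mathcal{U}|=u\geq a$ and all $\mathcal{V}\subseteq[n]$ with $|\mathcal{V}|=v\geq b$ one has $|\mathcal{E}\cap(\mathcal{U}\times\mathcal{V})|\leq va+ub-ab$. *)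

theory Defs
  imports "HOL-Algebra.Ring"
begin

definition gen_matrix :: "'b ring \<Rightarrow> 'r set \<Rightarrow> 'p set \<Rightarrow> ('r \<Rightarrow> 'p \<Rightarrow> 'b) \<Rightarrow> bool" where
  "gen_matrix R K P G \<longleftrightarrow> finite K \<and> finite P \<and>
     (\<forall>i\<in>K. \<forall>j\<in>P. G i j \<in> carrier R) \<and>
     (\<forall>c. c \<in> K \<rightarrow> carrier R \<longrightarrow>
          (\<forall>j\<in>P. (\<Oplus>\<^bsub>R\<^esub> i\<in>K. c i \<otimes>\<^bsub>R\<^esub> G i j) = \<zero>\<^bsub>R\<^esub>) \<longrightarrow>
          (\<forall>i\<in>K. c i = \<zero>\<^bsub>R\<^esub>))"

definition row_span :: "'b ring \<Rightarrow> 'r set \<Rightarrow> 'p set \<Rightarrow> ('r \<Rightarrow> 'p \<Rightarrow> 'b) \<Rightarrow> ('p \<Rightarrow> 'b) set" where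
  "row_span R K P G = {(\<lambda>j\<in>P. (\<Oplus>\<^bsub>R\<^esub> i\<in>K. c i \<otimes>\<^bsub>R\<^esub> G i j)) | c. c \<in> K \<rightarrow> carrier R}"

definition kron :: "'b ring \<Rightarrow> ('r \<Rightarrow> 'p \<Rightarrow> 'b) \<Rightarrow> ('s \<Rightarrow> 'q \<Rightarrow> 'b) \<Rightarrow> ('r \<times> 's \<Rightarrow> 'p \<times> 'q \<Rightarrow> 'b)" where
  "kron R G1 G2 = (\<lambda>(i1, i2) (r, s). G1 i1 r \<otimes>\<^bsub>R\<^esub> G2 i2 s)"

definition corrects :: "('p \<Rightarrow> 'b) set \<Rightarrow> 'p set \<Rightarrow> 'p set \<Rightarrow> bool" where
  "corrects C P E \<longleftrightarrow> (\<forall>x\<in>C. \<forall>y\<in>C. (\<forall>p\<in>P - E. x p = y p) \<longrightarrow> x = y)"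

text \<open>Correctable in T_{m x n}(a,b,0): some finite field (represented with carrier in nat,
  which covers every finite field up to isomorphism), some column code [m, >= m-a] with
  generator matrix G1 and row code [n, >= n-b] with generator matrix G2, such that the
  tensor code (row span of the Kronecker product) corrects E.\<close>
definition correctable :: "nat \<Rightarrow> nat \<Rightarrow> nat \<Rightarrow> nat \<Rightarrow> (nat \<times> nat) set \<Rightarrow> bool" where
  "correctable m n a b E \<longleftrightarrow>
     (\<exists>(R :: nat ring) (K1 :: nat set) (K2 :: nat set) G1 G2.
        field R \<and> finite (carrier R) \<and>
        gen_matrix R K1 {1..m} G1 \<and> card K1 \<ge> m - a \<and>
        gen_matrix R K2 {1..n} G2 \<and> card K2 \<ge> n - b \<and>
        corrects (row_span R (K1 \<times> K2) ({1..m} \<times> {1..n}) (kron R G1 G2))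
                 ({1..m} \<times> {1..n}) E)"

definition regular :: "nat \<Rightarrow> nat \<Rightarrow> nat \<Rightarrow> nat \<Rightarrow> (nat \<times> nat) set \<Rightarrow> bool" where
  "regular m n a b E \<longleftrightarrow>
     (\<forall>U V. U \<subseteq> {1..m} \<and> V \<subseteq> {1..n} \<and> card U \<ge> a \<and> card V \<ge> b \<longrightarrow>
        int (card (E \<inter> (U \<times> V))) \<le> int (card V) * int a + int (card U) * int b - int a * int b)"

end

theory Submission
  imports Defs
begin

(* The 5 x 5 pattern with a = b = 2 whose unerased positions are (1,5), the block {2,3} x {3,4}
   and the block {4,5} x {1,2} is regular; this is a finite check.  It is not correctable: over any
   field, a code of dimension at least 3 has a nonzero word vanishing at any two prescribed
   coordinates, so the tensor code contains nonzero product words x (x) y that vanish on all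
   unerased positions except possibly (1,5), e.g. with x zero in rows 4,5 and y zero in columns
   3,4, or with x' zero in rows 2,3 and y' zero in columns 1,2.  Cancelling (1,5) in a suitable
   combination of two such words leaves a nonzero codeword supported in the erasures, so two
   distinct codewords agree outside the pattern.  (If x is supported in row 1 alone, x (x) w
   with w zero in column 5 is already such a codeword.) *)

lemma (in abelian_monoid) finsum_cartesian_product:
  assumes "finite A" "finite B" "\<And>a b. a \<in> A \<Longrightarrow> b \<in> B \<Longrightarrow> f a b \<in> carrier G"
  shows "(\<Oplus>a\<in>A. \<Oplus>b\<in>B. f a b) = (\<Oplus>p\<in>A \<times> B. f (fst p) (snd p))"
  using assms(1,3)
proof (induction A rule: finite_induct)
  case empty
  then show ?case by simp
next
  case (insert x A)
  have row: "(\<Oplus>p\<in>{x} \<times> B. f (fst p) (snd p)) = (\<Oplus>b\<in>B. f x b)"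
  proof -
    have "{x} \<times> B = Pair x ` B" by auto
    moreover have "(\<Oplus>p\<in>Pair x ` B. f (fst p) (snd p)) = (\<Oplus>b\<in>B. f x b)"
      using insert.prems by (subst finsum_reindex) (auto simp: inj_on_def Pi_def)
    ultimately show ?thesis by simp
  qed
  have "insert x A \<times> B = {x} \<times> B \<union> A \<times> B" by auto
  then have "(\<Oplus>p\<in>insert x A \<times> B. f (fst p) (snd p)) =
      (\<Oplus>p\<in>{x} \<times> B. f (fst p) (snd p)) \<oplus> (\<Oplus>p\<in>A \<times> B. f (fst p) (snd p))"
    using insert assms(2) by (auto intro!: finsum_Un_disjoint)
  then show ?case
    using insert by (simp add: row Pi_def)
qed

lemma (in cring) finsum_times_finsum:
  assumes "finite A" "finite B" "f \<in> A \<rightarrow> carrier R" "g \<in> B \<rightarrow> carrier R"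
  shows "(\<Oplus>a\<in>A. f a) \<otimes> (\<Oplus>b\<in>B. g b) = (\<Oplus>p\<in>A \<times> B. f (fst p) \<otimes> g (snd p))"
proof -
  have "(\<Oplus>a\<in>A. f a) \<otimes> (\<Oplus>b\<in>B. g b) = (\<Oplus>a\<in>A. f a \<otimes> (\<Oplus>b\<in>B. g b))"
    using assms by (simp add: finsum_ldistr)
  also have "\<dots> = (\<Oplus>a\<in>A. \<Oplus>b\<in>B. f a \<otimes> g b)"
    using assms by (intro finsum_cong') (auto simp: finsum_rdistr Pi_iff intro!: finsum_closed)
  also have "\<dots> = (\<Oplus>p\<in>A \<times> B. f (fst p) \<otimes> g (snd p))"
    using assms by (intro finsum_cartesian_product) auto
  finally show ?thesis .
qed

lemma (in cring) finsum_lincomb: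
  assumes "finite K" "a \<in> K \<rightarrow> carrier R" "b \<in> K \<rightarrow> carrier R" "g \<in> K \<rightarrow> carrier R"
    "\<mu> \<in> carrier R"
  shows "(\<Oplus>i\<in>K. (a i \<oplus> \<mu> \<otimes> b i) \<otimes> g i) =
    (\<Oplus>i\<in>K. a i \<otimes> g i) \<oplus> \<mu> \<otimes> (\<Oplus>i\<in>K. b i \<otimes> g i)"
proof -
  have "(\<Oplus>i\<in>K. (a i \<oplus> \<mu> \<otimes> b i) \<otimes> g i) = (\<Oplus>i\<in>K. a i \<otimes> g i \<oplus> \<mu> \<otimes> (b i \<otimes> g i))"
    using assms by (intro finsum_cong') (auto simp: l_distr m_assoc Pi_iff)
  also have "\<dots> = (\<Oplus>i\<in>K. a i \<otimes> g i) \<oplus> (\<Oplus>i\<in>K. \<mu> \<otimes> (b i \<otimes> g i))"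
    using assms by (intro finsum_addf) (auto simp: Pi_iff)
  also have "(\<Oplus>i\<in>K. \<mu> \<otimes> (b i \<otimes> g i)) = \<mu> \<otimes> (\<Oplus>i\<in>K. b i \<otimes> g i)"
    using assms by (intro finsum_rdistr[symmetric]) (auto simp: Pi_iff)
  finally show ?thesis .
qed

lemma (in field) add_cancelling_multiple:
  assumes "a \<in> carrier R" "b \<in> carrier R" "b \<noteq> \<zero>"
  shows "a \<oplus> \<ominus> (a \<otimes> inv b) \<otimes> b = \<zero>"
proof -
  have "inv b \<in> carrier R" "inv b \<otimes> b = \<one>"
    using assms field_Units by auto
  then show ?thesis
    using assms by (simp add: l_minus m_assoc r_neg)
qed

lemma (in field) lincomb_cancelling_finsum:
  assumes "finite K" "a \<in> K \<rightarrow> carrier R" "b \<in> K \<rightarrow> carrier R" "g \<in> K \<rightarrow> carrier R"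
    "(\<Oplus>i\<in>K. b i \<otimes> g i) \<noteq> \<zero>"
  obtains \<mu> where "\<mu> \<in> carrier R" "(\<Oplus>i\<in>K. (a i \<oplus> \<mu> \<otimes> b i) \<otimes> g i) = \<zero>"
proof -
  define s where "s = (\<Oplus>i\<in>K. a i \<otimes> g i)"
  define t where "t = (\<Oplus>i\<in>K. b i \<otimes> g i)"
  have st: "s \<in> carrier R" "t \<in> carrier R"
    unfolding s_def t_def using assms(2-4) by (auto intro!: finsum_closed)
  then have "\<ominus> (s \<otimes> inv t) \<in> carrier R"
    using assms(5) field_Units unfolding t_def by auto
  moreover have "(\<Oplus>i\<in>K. (a i \<oplus> \<ominus> (s \<otimes> inv t) \<otimes> b i) \<otimes> g i) = \<zero>"
    using finsum_lincomb[OF assms(1-4) calculation] add_cancelling_multiple[OF st assms(5)[folded t_def]]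
    unfolding s_def t_def by simp
  ultimately show ?thesis using that by blast
qed

(* The prescribed zero coordinates Z make the induction go through: two solutions of the smaller
   system, the second vanishing where the first does not, combine to a nonzero solution of one
   more equation. *)
lemma (in field) homogeneous_system_nontrivial_solution:
  assumes "finite J" "finite K" "Z \<subseteq> K" "card J + card Z < card K"
    "\<And>j i. j \<in> J \<Longrightarrow> i \<in> K \<Longrightarrow> f j i \<in> carrier R"
  shows "\<exists>c\<in>K \<rightarrow> carrier R. (\<forall>i\<in>Z. c i = \<zero>) \<and> (\<exists>i\<in>K. c i \<noteq> \<zero>) \<and>
    (\<forall>j\<in>J. (\<Oplus>i\<in>K. c i \<otimes> f j i) = \<zero>)"
  using assms(1,3-5)
proof (induction J arbitrary: Z rule: finite_induct)
  case empty
  then have "Z \<noteq> K" by auto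
  then obtain k where "k \<in> K" "k \<notin> Z" using empty.prems(1) by blast
  then show ?case
    by (intro bexI[of _ "\<lambda>i. if i = k then \<one> else \<zero>"]) auto
next
  case (insert j0 J)
  have "finite Z" using insert.prems(1) assms(2) finite_subset by blast
  have f_J: "\<And>j i. j \<in> J \<Longrightarrow> i \<in> K \<Longrightarrow> f j i \<in> carrier R"
    using insert.prems(3) by auto
  have card_Z: "card J + card Z < card K" using insert.prems(2) insert.hyps by simp
  obtain c1 k where c1: "c1 \<in> K \<rightarrow> carrier R" "\<forall>i\<in>Z. c1 i = \<zero>" "k \<in> K" "c1 k \<noteq> \<zero>"
      "\<forall>j\<in>J. (\<Oplus>i\<in>K. c1 i \<otimes> f j i) = \<zero>"
    using insert.IH[OF insert.prems(1) card_Z f_J] by blast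
  have "k \<notin> Z" using c1 by auto
  then have card_kZ: "card J + card (insert k Z) < card K"
    using insert \<open>finite Z\<close> by simp
  obtain c2 where c2: "c2 \<in> K \<rightarrow> carrier R" "\<forall>i\<in>insert k Z. c2 i = \<zero>" "\<exists>i\<in>K. c2 i \<noteq> \<zero>"
      "\<forall>j\<in>J. (\<Oplus>i\<in>K. c2 i \<otimes> f j i) = \<zero>"
    using insert.IH[OF _ card_kZ f_J] c1(3) insert.prems(1) by blast
  have f_j0: "f j0 \<in> K \<rightarrow> carrier R" using insert.prems(3) by auto
  show ?case
  proof (cases "(\<Oplus>i\<in>K. c2 i \<otimes> f j0 i) = \<zero>")
    case True
    then show ?thesis using c2 by auto
  next
    case False
    with lincomb_cancelling_finsum[OF assms(2) c1(1) c2(1) f_j0] obtain \<mu>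
      where \<mu>: "\<mu> \<in> carrier R" "(\<Oplus>i\<in>K. (c1 i \<oplus> \<mu> \<otimes> c2 i) \<otimes> f j0 i) = \<zero>"
      by blast
    define c where "c i = c1 i \<oplus> \<mu> \<otimes> c2 i" for i
    have "c \<in> K \<rightarrow> carrier R" using c1(1) c2(1) \<mu>(1) by (auto simp: c_def Pi_iff)
    moreover have "\<forall>i\<in>Z. c i = \<zero>" using c1(2) c2(2) \<mu>(1) by (simp add: c_def)
    moreover have "c k \<noteq> \<zero>" using c1(1,3,4) c2(2) \<mu>(1) by (auto simp: c_def Pi_iff)
    moreover have "(\<Oplus>i\<in>K. c i \<otimes> f j i) = \<zero>" if "j \<in> J" for j
      using finsum_lincomb[OF assms(2) c1(1) c2(1) _ \<mu>(1), of "f j"] that c1(5) c2(4) \<mu>(1) f_J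
      by (auto simp: c_def)
    moreover have "(\<Oplus>i\<in>K. c i \<otimes> f j0 i) = \<zero>" using \<mu>(2) by (simp add: c_def)
    ultimately show ?thesis using c1(3) by blast
  qed
qed

(* row_span and kron take structures of the record type 'a ring, so the locales are specialised
   to it. *)
locale coefficient_ring = cring R for R :: "'a ring" (structure)
locale coefficient_field = field R for R :: "'a ring" (structure)
sublocale coefficient_field \<subseteq> coefficient_ring ..

definition tensor_word ::
    "('b, 'c) ring_scheme \<Rightarrow> 'p set \<Rightarrow> 'q set \<Rightarrow> ('p \<Rightarrow> 'b) \<Rightarrow> ('q \<Rightarrow> 'b) \<Rightarrow> 'p \<times> 'q \<Rightarrow> 'b"
  where "tensor_word R P Q x y = (\<lambda>(r, s)\<in>P \<times> Q. x r \<otimes>\<^bsub>R\<^esub> y s)"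

lemma tensor_word_apply [simp]:
  "r \<in> P \<Longrightarrow> s \<in> Q \<Longrightarrow> tensor_word R P Q x y (r, s) = x r \<otimes>\<^bsub>R\<^esub> y s"
  unfolding tensor_word_def by simp

context coefficient_ring
begin

lemma row_spanI: "c \<in> K \<rightarrow> carrier R \<Longrightarrow> (\<lambda>j\<in>P. \<Oplus>i\<in>K. c i \<otimes> G i j) \<in> row_span R K P G"
  unfolding row_span_def by blast

lemma row_span_closed:
  assumes "x \<in> row_span R K P G" "\<forall>i\<in>K. \<forall>j\<in>P. G i j \<in> carrier R" "j \<in> P"
  shows "x j \<in> carrier R"
  using assms unfolding row_span_def by (auto intro!: finsum_closed simp: Pi_iff)

lemma row_span_zero:
  assumes "\<forall>i\<in>K. \<forall>j\<in>P. G i j \<in> carrier R"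
  shows "(\<lambda>j\<in>P. \<zero>) \<in> row_span R K P G"
proof -
  have "(\<lambda>j\<in>P. \<Oplus>i\<in>K. \<zero> \<otimes> G i j) = (\<lambda>j\<in>P. \<zero>)"
    using assms by (intro restrict_ext add.finprod_one_eqI) auto
  then show ?thesis
    using row_spanI[where c = "\<lambda>_. \<zero>" and K = K and P = P and G = G] by simp
qed

lemma row_span_lincomb:
  assumes "u \<in> row_span R K P G" "v \<in> row_span R K P G" "\<mu> \<in> carrier R"
    "finite K" "\<forall>i\<in>K. \<forall>j\<in>P. G i j \<in> carrier R"
  shows "(\<lambda>p\<in>P. u p \<oplus> \<mu> \<otimes> v p) \<in> row_span R K P G"
proof -
  obtain a b where ab: "a \<in> K \<rightarrow> carrier R" "b \<in> K \<rightarrow> carrier R"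
    and u: "u = (\<lambda>j\<in>P. \<Oplus>i\<in>K. a i \<otimes> G i j)" and v: "v = (\<lambda>j\<in>P. \<Oplus>i\<in>K. b i \<otimes> G i j)"
    using assms(1,2) unfolding row_span_def by blast
  have "(\<lambda>p\<in>P. u p \<oplus> \<mu> \<otimes> v p) = (\<lambda>j\<in>P. \<Oplus>i\<in>K. (a i \<oplus> \<mu> \<otimes> b i) \<otimes> G i j)"
    using ab assms(3-5) by (intro restrict_ext) (simp add: u v finsum_lincomb Pi_iff)
  moreover have "(\<lambda>i. a i \<oplus> \<mu> \<otimes> b i) \<in> K \<rightarrow> carrier R"
    using ab assms(3) by (auto simp: Pi_iff)
  ultimately show ?thesis
    using row_spanI by simp
qed

lemma tensor_word_in_row_span_kron:
  assumes "x \<in> row_span R K1 P1 G1" "y \<in> row_span R K2 P2 G2" "finite K1" "finite K2"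
    "\<forall>i\<in>K1. \<forall>j\<in>P1. G1 i j \<in> carrier R" "\<forall>i\<in>K2. \<forall>j\<in>P2. G2 i j \<in> carrier R"
  shows "tensor_word R P1 P2 x y \<in> row_span R (K1 \<times> K2) (P1 \<times> P2) (kron R G1 G2)"
proof -
  obtain a b where ab: "a \<in> K1 \<rightarrow> carrier R" "b \<in> K2 \<rightarrow> carrier R"
    and x: "x = (\<lambda>j\<in>P1. \<Oplus>i\<in>K1. a i \<otimes> G1 i j)" and y: "y = (\<lambda>j\<in>P2. \<Oplus>i\<in>K2. b i \<otimes> G2 i j)"
    using assms(1,2) unfolding row_span_def by blast
  have "x r \<otimes> y s = (\<Oplus>q\<in>K1 \<times> K2. (a (fst q) \<otimes> b (snd q)) \<otimes> kron R G1 G2 q (r, s))"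
    if "r \<in> P1" "s \<in> P2" for r s
  proof -
    have "x r \<otimes> y s = (\<Oplus>q\<in>K1 \<times> K2. (a (fst q) \<otimes> G1 (fst q) r) \<otimes> (b (snd q) \<otimes> G2 (snd q) s))"
      using that ab assms(3-6) by (simp add: x y finsum_times_finsum Pi_iff)
    also have "\<dots> = (\<Oplus>q\<in>K1 \<times> K2. (a (fst q) \<otimes> b (snd q)) \<otimes> kron R G1 G2 q (r, s))"
      using that ab assms(5,6) by (intro finsum_cong') (auto simp: kron_def m_ac Pi_iff)
    finally show ?thesis .
  qed
  then have "tensor_word R P1 P2 x y =
      (\<lambda>p\<in>P1 \<times> P2. \<Oplus>q\<in>K1 \<times> K2. (a (fst q) \<otimes> b (snd q)) \<otimes> kron R G1 G2 q p)"
    unfolding tensor_word_def by (intro restrict_ext) auto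
  moreover have "(\<lambda>q. a (fst q) \<otimes> b (snd q)) \<in> K1 \<times> K2 \<rightarrow> carrier R"
    using ab by (auto simp: Pi_iff)
  ultimately show ?thesis
    using row_spanI by simp
qed

lemma not_corrects_row_span_if_nonzero_word_in_erasures:
  assumes "W \<in> row_span R K P G" "\<forall>i\<in>K. \<forall>j\<in>P. G i j \<in> carrier R"
    "\<forall>p\<in>P - E. W p = \<zero>" "p \<in> P" "W p \<noteq> \<zero>"
  shows "\<not> corrects (row_span R K P G) P E"
  using assms row_span_zero[OF assms(2)] unfolding corrects_def by fastforce

end

context coefficient_field
begin

lemma gen_matrix_nonzero_word_vanishing_on:
  assumes "gen_matrix R K P G" "Z \<subseteq> P" "card Z < card K"
  shows "\<exists>x\<in>row_span R K P G. (\<forall>j\<in>Z. x j = \<zero>) \<and> (\<exists>j\<in>P. x j \<noteq> \<zero>)"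
proof -
  have G: "finite K" "finite P" "\<forall>i\<in>K. \<forall>j\<in>P. G i j \<in> carrier R"
    and independent: "\<And>c. c \<in> K \<rightarrow> carrier R \<Longrightarrow> \<forall>j\<in>P. (\<Oplus>i\<in>K. c i \<otimes> G i j) = \<zero> \<Longrightarrow>
      \<forall>i\<in>K. c i = \<zero>"
    using assms(1) unfolding gen_matrix_def by auto
  have "finite Z" using G(2) assms(2) finite_subset by blast
  moreover have "\<And>j i. j \<in> Z \<Longrightarrow> i \<in> K \<Longrightarrow> G i j \<in> carrier R"
    using G(3) assms(2) by auto
  ultimately obtain c where c: "c \<in> K \<rightarrow> carrier R" "\<exists>i\<in>K. c i \<noteq> \<zero>"
      "\<forall>j\<in>Z. (\<Oplus>i\<in>K. c i \<otimes> G i j) = \<zero>"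
    using homogeneous_system_nontrivial_solution[of Z K "{}" "\<lambda>j i. G i j"] G(1) assms(3)
    by auto
  show ?thesis
    using independent[OF c(1)] c(2,3) assms(2) by (intro bexI[OF _ row_spanI[OF c(1)]]) auto
qed

lemma row_span_eliminate_position:
  assumes G: "finite K" "\<forall>i\<in>K. \<forall>j\<in>P. G i j \<in> carrier R"
    and u: "u \<in> row_span R K P G" "p \<in> P" "u p \<noteq> \<zero>"
    and v: "v \<in> row_span R K P G" "v p = \<zero>" "p' \<in> P" "v p' \<noteq> \<zero>"
    and "q \<in> P"
  shows "\<exists>w\<in>row_span R K P G. w q = \<zero> \<and> (\<exists>p\<in>P. w p \<noteq> \<zero>) \<and>
    (\<forall>p\<in>P. u p = \<zero> \<longrightarrow> v p = \<zero> \<longrightarrow> w p = \<zero>)"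
proof (cases "v q = \<zero>")
  case True
  then show ?thesis using v by blast
next
  case False
  have u_carrier: "u r \<in> carrier R" and v_carrier: "v r \<in> carrier R" if "r \<in> P" for r
    using row_span_closed[OF u(1) G(2) that] row_span_closed[OF v(1) G(2) that] .
  define \<mu> where "\<mu> = \<ominus> (u q \<otimes> inv (v q))"
  have \<mu>: "\<mu> \<in> carrier R"
    unfolding \<mu>_def using False field_Units u_carrier v_carrier \<open>q \<in> P\<close> by auto
  define w where "w = (\<lambda>r\<in>P. u r \<oplus> \<mu> \<otimes> v r)"
  have "w \<in> row_span R K P G"
    unfolding w_def using row_span_lincomb[OF u(1) v(1) \<mu> G] .
  moreover have "w q = \<zero>"
    unfolding w_def \<mu>_def
    using add_cancelling_multiple[OF u_carrier v_carrier False] \<open>q \<in> P\<close> by simp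
  moreover have "w p \<noteq> \<zero>"
    unfolding w_def using u v \<mu> u_carrier by simp
  moreover have "\<forall>r\<in>P. u r = \<zero> \<longrightarrow> v r = \<zero> \<longrightarrow> w r = \<zero>"
    unfolding w_def using \<mu> by simp
  ultimately show ?thesis using u(2) by blast
qed

end

locale tensor_code = coefficient_field R for R :: "'a ring" (structure) +
  fixes K1 :: "'k set" and P1 :: "'p set" and G1 :: "'k \<Rightarrow> 'p \<Rightarrow> 'a"
    and K2 :: "'l set" and P2 :: "'q set" and G2 :: "'l \<Rightarrow> 'q \<Rightarrow> 'a"
  assumes gen_matrix1: "gen_matrix R K1 P1 G1" and gen_matrix2: "gen_matrix R K2 P2 G2"
begin

abbreviation "C1 \<equiv> row_span R K1 P1 G1"
abbreviation "C2 \<equiv> row_span R K2 P2 G2"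
abbreviation "C \<equiv> row_span R (K1 \<times> K2) (P1 \<times> P2) (kron R G1 G2)"

lemma entries1: "finite K1" "\<forall>i\<in>K1. \<forall>j\<in>P1. G1 i j \<in> carrier R"
  using gen_matrix1 unfolding gen_matrix_def by auto

lemma entries2: "finite K2" "\<forall>i\<in>K2. \<forall>j\<in>P2. G2 i j \<in> carrier R"
  using gen_matrix2 unfolding gen_matrix_def by auto

lemma C1_closed: "x \<in> C1 \<Longrightarrow> r \<in> P1 \<Longrightarrow> x r \<in> carrier R"
  by (rule row_span_closed[OF _ entries1(2)])

lemma C2_closed: "y \<in> C2 \<Longrightarrow> s \<in> P2 \<Longrightarrow> y s \<in> carrier R"
  by (rule row_span_closed[OF _ entries2(2)])

lemma tensor_word_in_C: "x \<in> C1 \<Longrightarrow> y \<in> C2 \<Longrightarrow> tensor_word R P1 P2 x y \<in> C"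
  by (rule tensor_word_in_row_span_kron[OF _ _ entries1(1) entries2(1) entries1(2) entries2(2)])

lemma tensor_word_nonzero:
  assumes "x \<in> C1" "y \<in> C2" "r \<in> P1" "s \<in> P2" "x r \<noteq> \<zero>" "y s \<noteq> \<zero>"
  shows "tensor_word R P1 P2 x y (r, s) \<noteq> \<zero>"
  using assms C1_closed C2_closed by (simp add: integral_iff)

lemma kron_entries: "\<forall>q\<in>K1 \<times> K2. \<forall>p\<in>P1 \<times> P2. kron R G1 G2 q p \<in> carrier R"
  using entries1 entries2 by (auto simp: kron_def)

lemma not_corrects_C_if_nonzero_word_in_erasures:
  "W \<in> C \<Longrightarrow> \<forall>p\<in>P1 \<times> P2 - E. W p = \<zero> \<Longrightarrow> p \<in> P1 \<times> P2 \<Longrightarrow> W p \<noteq> \<zero> \<Longrightarrow>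
    \<not> corrects C (P1 \<times> P2) E"
  using not_corrects_row_span_if_nonzero_word_in_erasures[OF _ kron_entries] .

end

definition counterexample_unerased :: "(nat \<times> nat) set" where
  "counterexample_unerased = {(1, 5)} \<union> {2, 3} \<times> {3, 4} \<union> {4, 5} \<times> {1, 2}"

definition counterexample_pattern :: "(nat \<times> nat) set" where
  "counterexample_pattern = {1..5} \<times> {1..5} - counterexample_unerased"

lemma ball_counterexample_unerased:
  "(\<forall>p\<in>counterexample_unerased. Q p) \<longleftrightarrow>
    Q (1, 5) \<and> Q (2, 3) \<and> Q (2, 4) \<and> Q (3, 3) \<and> Q (3, 4) \<and> Q (4, 1) \<and> Q (4, 2) \<and> Q (5, 1) \<and> Q (5, 2)"
  unfolding counterexample_unerased_def by auto

lemma counterexample_pattern_regular: "regular 5 5 2 2 counterexample_pattern"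
proof -
  have "\<forall>U\<in>Pow {1..5::nat}. \<forall>V\<in>Pow {1..5::nat}. 2 \<le> card U \<longrightarrow> 2 \<le> card V \<longrightarrow>
      int (card (counterexample_pattern \<inter> U \<times> V)) \<le> int (card V) * 2 + int (card U) * 2 - 4"
    unfolding counterexample_pattern_def counterexample_unerased_def by code_simp
  then show ?thesis
    unfolding regular_def by auto
qed

lemma counterexample_pattern_complement:
  "{1..5} \<times> {1..5} - counterexample_pattern = counterexample_unerased"
  unfolding counterexample_pattern_def counterexample_unerased_def by auto

locale counterexample_code = tensor_code R K1 "{1..5::nat}" G1 K2 "{1..5::nat}" G2
  for R :: "'a ring" (structure) and K1 :: "'k set" and G1 and K2 :: "'l set" and G2 +
  assumes dim1: "3 \<le> card K1" and dim2: "3 \<le> card K2"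
begin

lemma C1_word_vanishing_on:
  "Z \<subseteq> {1..5} \<Longrightarrow> card Z \<le> 2 \<Longrightarrow> \<exists>x\<in>C1. (\<forall>j\<in>Z. x j = \<zero>) \<and> (\<exists>j\<in>{1..5}. x j \<noteq> \<zero>)"
  using gen_matrix_nonzero_word_vanishing_on[OF gen_matrix1] dim1 by simp

lemma C2_word_vanishing_on:
  "Z \<subseteq> {1..5} \<Longrightarrow> card Z \<le> 2 \<Longrightarrow> \<exists>y\<in>C2. (\<forall>j\<in>Z. y j = \<zero>) \<and> (\<exists>j\<in>{1..5}. y j \<noteq> \<zero>)"
  using gen_matrix_nonzero_word_vanishing_on[OF gen_matrix2] dim2 by simp

lemma not_corrects_if_nonzero_word_vanishing_on_unerased:
  assumes "W \<in> C" "\<forall>p\<in>counterexample_unerased. W p = \<zero>" "p \<in> {1..5} \<times> {1..5}" "W p \<noteq> \<zero>"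
  shows "\<not> corrects C ({1..5} \<times> {1..5}) counterexample_pattern"
proof -
  have "\<forall>p\<in>{1..5} \<times> {1..5} - counterexample_pattern. W p = \<zero>"
    unfolding counterexample_pattern_complement by (rule assms(2))
  from not_corrects_C_if_nonzero_word_in_erasures[OF assms(1) this assms(3,4)] show ?thesis .
qed

lemma not_corrects_if_word_on_first_row:
  assumes x: "x \<in> C1" "x 2 = \<zero>" "x 3 = \<zero>" "x 4 = \<zero>" "x 5 = \<zero>" "r \<in> {1..5}" "x r \<noteq> \<zero>"
  shows "\<not> corrects C ({1..5} \<times> {1..5}) counterexample_pattern"
proof -
  obtain w s where w: "w \<in> C2" "w 5 = \<zero>" "s \<in> {1..5}" "w s \<noteq> \<zero>"
    using C2_word_vanishing_on[of "{5}"] by auto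
  have "\<forall>p\<in>counterexample_unerased. tensor_word R {1..5} {1..5} x w p = \<zero>"
    using x(2-5) w(2) C1_closed[OF x(1)] C2_closed[OF w(1)]
    by (simp add: ball_counterexample_unerased)
  moreover have "tensor_word R {1..5} {1..5} x w (r, s) \<noteq> \<zero>"
    using tensor_word_nonzero x w by simp
  ultimately show ?thesis
    using not_corrects_if_nonzero_word_vanishing_on_unerased tensor_word_in_C[OF x(1) w(1)] x(6) w(3)
    by blast
qed

lemma not_corrects_if_word_on_middle_rows:
  assumes x: "x \<in> C1" "x 4 = \<zero>" "x 5 = \<zero>" "i \<in> {2, 3}" "x i \<noteq> \<zero>"
  shows "\<not> corrects C ({1..5} \<times> {1..5}) counterexample_pattern"
proof -
  obtain y j where y: "y \<in> C2" "y 3 = \<zero>" "y 4 = \<zero>" "j \<in> {1..5}" "y j \<noteq> \<zero>"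
    using C2_word_vanishing_on[of "{3, 4}"] by auto
  obtain x' i' where x': "x' \<in> C1" "x' 2 = \<zero>" "x' 3 = \<zero>" "i' \<in> {1..5}" "x' i' \<noteq> \<zero>"
    using C1_word_vanishing_on[of "{2, 3}"] by auto
  obtain y' j' where y': "y' \<in> C2" "y' 1 = \<zero>" "y' 2 = \<zero>" "j' \<in> {1..5}" "y' j' \<noteq> \<zero>"
    using C2_word_vanishing_on[of "{1, 2}"] by auto
  let ?A = "tensor_word R {1..5} {1..5} x y" and ?B = "tensor_word R {1..5} {1..5} x' y'"
  have i: "i \<in> {1..5}" using x(4) by auto
  have A_ne: "?A (i, j) \<noteq> \<zero>" using tensor_word_nonzero x y i by simp
  have B_eq: "?B (i, j) = \<zero>" using x(4) i y(4) x' C2_closed[OF y'(1)] by auto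
  have B_ne: "?B (i', j') \<noteq> \<zero>" using tensor_word_nonzero x' y' by simp
  have "finite (K1 \<times> K2)" using entries1(1) entries2(1) by simp
  moreover have "(i, j) \<in> {1..5} \<times> {1..5}" "(i', j') \<in> {1..5} \<times> {1..5}"
    "(1, 5) \<in> {1..5::nat} \<times> {1..5::nat}"
    using i y(4) x'(4) y'(4) by auto
  ultimately obtain W where W: "W \<in> C" "W (1, 5) = \<zero>" "\<exists>p\<in>{1..5} \<times> {1..5}. W p \<noteq> \<zero>"
      "\<forall>p\<in>{1..5} \<times> {1..5}. ?A p = \<zero> \<longrightarrow> ?B p = \<zero> \<longrightarrow> W p = \<zero>"
    using row_span_eliminate_position[OF _ kron_entries tensor_word_in_C[OF x(1) y(1)] _ A_ne
        tensor_word_in_C[OF x'(1) y'(1)] B_eq _ B_ne]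
    by blast
  have "\<forall>p\<in>counterexample_unerased. p \<noteq> (1, 5) \<longrightarrow> ?A p = \<zero> \<and> ?B p = \<zero>"
    using x(2,3) y(2,3) x'(2,3) y'(2,3)
      C1_closed[OF x(1)] C2_closed[OF y(1)] C1_closed[OF x'(1)] C2_closed[OF y'(1)]
    by (simp add: ball_counterexample_unerased)
  then have "\<forall>p\<in>counterexample_unerased. W p = \<zero>"
    using W(2,4) by (auto simp: counterexample_unerased_def)
  then show ?thesis
    using not_corrects_if_nonzero_word_vanishing_on_unerased W(1,3) by blast
qed

lemma not_corrects_counterexample_pattern:
  "\<not> corrects C ({1..5} \<times> {1..5}) counterexample_pattern"
proof -
  obtain x r where x: "x \<in> C1" "x 4 = \<zero>" "x 5 = \<zero>" "r \<in> {1..5}" "x r \<noteq> \<zero>"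
    using C1_word_vanishing_on[of "{4, 5}"] by auto
  consider "x 2 = \<zero>" "x 3 = \<zero>" | i where "i \<in> {2, 3}" "x i \<noteq> \<zero>"
    by auto
  then show ?thesis
    by cases (use x not_corrects_if_word_on_first_row not_corrects_if_word_on_middle_rows in blast)+
qed

end

lemma counterexample_pattern_not_correctable: "\<not> correctable 5 5 2 2 counterexample_pattern"
proof
  assume "correctable 5 5 2 2 counterexample_pattern"
  then obtain R :: "nat ring" and K1 K2 :: "nat set" and G1 G2 where "field R"
    and codes: "gen_matrix R K1 {1..5} G1" "3 \<le> card K1" "gen_matrix R K2 {1..5} G2" "3 \<le> card K2"
    and "corrects (row_span R (K1 \<times> K2) ({1..5} \<times> {1..5}) (kron R G1 G2))
      ({1..5} \<times> {1..5}) counterexample_pattern"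
    unfolding correctable_def by auto
  moreover have "counterexample_code R K1 G1 K2 G2"
    using \<open>field R\<close> codes
    by (simp add: counterexample_code_def counterexample_code_axioms_def tensor_code_def
        tensor_code_axioms_def coefficient_field_def)
  ultimately show False
    using counterexample_code.not_corrects_counterexample_pattern by blast
qed

theorem theorem3:
  shows "\<not> (\<forall>(m::nat) (n::nat) (a::nat) (b::nat) (E :: (nat \<times> nat) set).
            a < m \<longrightarrow> b < n \<longrightarrow> E \<subseteq> {1..m} \<times> {1..n} \<longrightarrow>
            (correctable m n a b E \<longleftrightarrow> regular m n a b E))"
proof
  assume "\<forall>(m::nat) (n::nat) (a::nat) (b::nat) (E :: (nat \<times> nat) set).
            a < m \<longrightarrow> b < n \<longrightarrow> E \<subseteq> {1..m} \<times> {1..n} \<longrightarrow>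
            (correctable m n a b E \<longleftrightarrow> regular m n a b E)"
  moreover have "counterexample_pattern \<subseteq> {1..5} \<times> {1..5}"
    unfolding counterexample_pattern_def by blast
  ultimately have "correctable 5 5 2 2 counterexample_pattern \<longleftrightarrow> regular 5 5 2 2 counterexample_pattern"
    by simp
  then show False
    using counterexample_pattern_regular counterexample_pattern_not_correctable by simp
qed

end
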